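(* Under the standing assumptions, $\sum_{n\eta_1\le S\le n\eta_2}\Phi(S)=o(1)$ as $n\to\infty$, the sum being over integers $S$.
   Context: Parameters: integer $k\ge2$, constants $\alpha>0$, $r>0$, $0<p<1$; $d=n^{\alpha}$ (treated as an integer), $m=n\ln d$, $\tau=\frac1{1-p}$, $r_{cr}=\frac1{\ln\tau}$. Standing assumptions: $(2k-1)\alpha>1$, $k\alpha\le1$, $k\ge\frac{\tau\ln\tau}{\tau-1}$, and $r<r_{cr}$. Notation: $f(s)=1+\frac{p}{1-p}\cdot\frac{s^k-d^{-k}}{1-d^{-k}}$ for $s\in[0,1]$; $B(S)=\binom{n}{S}\left(\frac1d\right)^{S}\left(1-\frac1d\right)^{n-S}$; $W(S)=f(S/n)^{rm}$; $\Phi(S)=B(S)W(S)$. Let $\lambda>0$ be a fixed constant and $\eta_1=\frac1d+\frac{\lambda}{n^{1-(k-1)\alpha}\ln d}$. Let $\alpha_0=\frac{(2k-1)\alpha-1}{2(k-1)}$, and let $\eta_2,\eta_3,\mu$ be constants with $0<\eta_2<\eta_3<1$, $\alpha_0/\alpha-\mu\eta_2^{k-1}>0$, $\mu>\frac{kpr}{1-p}$, and $r\ln(1-p)+\eta_3>0$. *)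

theory Defs
  imports "HOL-Analysis.Analysis"
begin

definition dd :: "real \<Rightarrow> nat \<Rightarrow> real" where
  "dd \<alpha> n = real n powr \<alpha>"

definition mm :: "real \<Rightarrow> nat \<Rightarrow> real" where
  "mm \<alpha> n = real n * ln (dd \<alpha> n)"

definition tau :: "real \<Rightarrow> real" where
  "tau p = 1 / (1 - p)"

definition ff :: "nat \<Rightarrow> real \<Rightarrow> real \<Rightarrow> real \<Rightarrow> real" where
  "ff k p d s = 1 + p / (1 - p) * ((s ^ k - (1 / d) ^ k) / (1 - (1 / d) ^ k))"

definition BB :: "nat \<Rightarrow> real \<Rightarrow> nat \<Rightarrow> real" where
  "BB n d S = real (n choose S) * (1 / d) ^ S * (1 - 1 / d) ^ (n - S)"

definition WW :: "nat \<Rightarrow> real \<Rightarrow> real \<Rightarrow> real \<Rightarrow> nat \<Rightarrow> nat \<Rightarrow> real" where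
  "WW k \<alpha> r p n S = ff k p (dd \<alpha> n) (real S / real n) powr (r * mm \<alpha> n)"

definition Phi :: "nat \<Rightarrow> real \<Rightarrow> real \<Rightarrow> real \<Rightarrow> nat \<Rightarrow> nat \<Rightarrow> real" where
  "Phi k \<alpha> r p n S = BB n (dd \<alpha> n) S * WW k \<alpha> r p n S"

definition eta1 :: "nat \<Rightarrow> real \<Rightarrow> real \<Rightarrow> nat \<Rightarrow> real" where
  "eta1 k \<alpha> lam n = 1 / dd \<alpha> n + lam / (real n powr (1 - (real k - 1) * \<alpha>) * ln (dd \<alpha> n))"

end

theory Submission
  imports Defs "HOL-Real_Asymp.Real_Asymp"
begin

text \<open>
  With \<open>u = S d / n\<close>, a Chernoff estimate gives \<open>B(S) \<le> exp (-(n/d) \<phi>(u))\<close>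
  for \<open>\<phi>(u) = u ln u - u + 1\<close>, and \<open>ln x \<le> x - 1\<close> gives \<open>W(S) \<le> exp ((n/d) A (u^k - 1))\<close>
  for \<open>A = 2 r p/(1-p) \<cdot> ln d / d^(k-1)\<close>. Writing \<open>\<eta>\<^sub>1 = (1 + \<delta>)/d\<close>, on the range
  \<open>1 + \<delta> \<le> u \<le> \<eta>\<^sub>2 d\<close> one has \<open>\<phi>(u) - A (u^k - 1) \<ge> \<delta>\<^sup>2/30\<close>: for moderate \<open>u\<close> because
  \<open>A\<close> is negligible against the curvature of \<open>\<phi>\<close>, and for large \<open>u\<close> because \<open>ln u - A u^(k-1)\<close>
  is concave and at least 3 at both ends of the range. As \<open>(n/d) \<delta>\<^sup>2\<close> grows like
  \<open>n^((2k-1)\<alpha>-1) / ln\<^sup>2 n\<close>, this beats the at most \<open>n + 1\<close> terms of the sum.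
\<close>

lemma binomial_term_le_one:
  fixes s :: real
  assumes "0 \<le> s" "s \<le> 1" "S \<le> n"
  shows "real (n choose S) * s ^ S * (1 - s) ^ (n - S) \<le> 1"
proof -
  have "real (n choose S) * s ^ S * (1 - s) ^ (n - S)
        \<le> (\<Sum>i\<le>n. real (n choose i) * s ^ i * (1 - s) ^ (n - i))"
    by (rule member_le_sum) (use assms in auto)
  also have "\<dots> = (s + (1 - s)) ^ n"
    by (rule binomial_ring[symmetric])
  finally show ?thesis by simp
qed

lemma binomial_term_le_exp_entropy:
  fixes n S :: nat and q s :: real
  assumes n: "n > 0" and q: "0 < q" "q < 1" and s: "0 < s" "s < 1"
    and s_def: "s = real S / real n"
  shows "real (n choose S) * q ^ S * (1 - q) ^ (n - S)
         \<le> exp (- (real n * q) * ((s / q) * ln (s / q) - s / q + 1))"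
proof -
  have Sn: "real S = real n * s" using s_def n by simp
  have "real S < real n" using Sn s n by (simp add: mult_less_cancel_left1)
  hence S_le_n: "S \<le> n" by simp
  have nS: "real (n - S) = real n * (1 - s)"
    using S_le_n Sn by (simp add: algebra_simps of_nat_diff)
  have split: "real (n choose S) * q ^ S * (1 - q) ^ (n - S) =
      (real (n choose S) * s ^ S * (1 - s) ^ (n - S)) * ((q / s) ^ S * ((1 - q) / (1 - s)) ^ (n - S))"
    using s by (simp add: power_divide field_simps)
  have "real (n choose S) * q ^ S * (1 - q) ^ (n - S) \<le> (q / s) ^ S * ((1 - q) / (1 - s)) ^ (n - S)"
    unfolding split using q s S_le_n binomial_term_le_one[of s S n]
    by (intro mult_left_le_one_le) auto
  also have "\<dots> \<le> exp (real S * ln (q / s)) * exp (real (n - S) * ((s - q) / (1 - s)))"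
  proof (rule mult_mono)
    show "(q / s) ^ S \<le> exp (real S * ln (q / s))"
      using q s by (simp add: exp_of_nat_mult)
    have "(1 - q) / (1 - s) = 1 + (s - q) / (1 - s)" using s by (simp add: field_simps)
    also have "\<dots> \<le> exp ((s - q) / (1 - s))" by (rule exp_ge_add_one_self)
    finally have "((1 - q) / (1 - s)) ^ (n - S) \<le> exp ((s - q) / (1 - s)) ^ (n - S)"
      using q s by (intro power_mono) auto
    then show "((1 - q) / (1 - s)) ^ (n - S) \<le> exp (real (n - S) * ((s - q) / (1 - s)))"
      by (simp only: exp_of_nat_mult)
  qed (use q s in auto)
  also have "\<dots> = exp (- (real n * q) * ((s / q) * ln (s / q) - s / q + 1))"
  proof -
    have "ln (q / s) = - ln (s / q)" using q s by (simp add: ln_div)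
    then have "real S * ln (q / s) + real (n - S) * ((s - q) / (1 - s))
             = - (real n * q) * ((s / q) * ln (s / q) - s / q + 1)"
      unfolding Sn nS using q s by (simp add: field_simps)
    then show ?thesis by (simp add: exp_add[symmetric])
  qed
  finally show ?thesis .
qed

lemma powr_le_exp_mult_minus_one:
  fixes f c :: real
  assumes "f > 0" "c \<ge> 0"
  shows "f powr c \<le> exp (c * (f - 1))"
proof -
  have "f powr c = exp (c * ln f)" using assms by (simp add: powr_def)
  also have "\<dots> \<le> exp (c * (f - 1))"
    using assms ln_le_minus_one[of f] by (simp add: mult_left_mono)
  finally show ?thesis .
qed

lemma xlnx_minus_x_ge_tangent:
  fixes a u :: real
  assumes "a > 0" "u > 0"
  shows "u * ln u - u \<ge> a * ln a - a + ln a * (u - a)"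
proof -
  have "ln (a / u) \<le> a / u - 1" using assms by (intro ln_le_minus_one) simp
  hence "ln u - ln a \<ge> 1 - a / u" using assms by (simp add: ln_div)
  hence "u * (ln u - ln a) \<ge> u * (1 - a / u)" using assms by (intro mult_left_mono) auto
  also have "u * (1 - a / u) = u - a" using assms by (simp add: field_simps)
  finally show ?thesis by (simp add: algebra_simps)
qed

lemma xlnx_minus_x_plus_one_nonneg:
  fixes a :: real
  assumes "a > 0"
  shows "a * ln a - a + 1 \<ge> 0"
  using xlnx_minus_x_ge_tangent[of 1 a] assms by simp

lemma power_minus_one_le:
  fixes u M :: real
  assumes "1 \<le> u" "u \<le> M"
  shows "u ^ k - 1 \<le> real k * M ^ (k - 1) * (u - 1)"
proof -
  have "(\<Sum>i<k. u ^ i) \<le> (\<Sum>i<k. M ^ (k - 1))"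
  proof (rule sum_mono)
    fix i assume "i \<in> {..<k}"
    have "u ^ i \<le> M ^ i" using assms by (intro power_mono) auto
    also have "\<dots> \<le> M ^ (k - 1)" using assms \<open>i \<in> {..<k}\<close> by (intro power_increasing) auto
    finally show "u ^ i \<le> M ^ (k - 1)" .
  qed
  hence "(u - 1) * (\<Sum>i<k. u ^ i) \<le> (u - 1) * (real k * M ^ (k - 1))"
    using assms by (intro mult_left_mono) auto
  thus ?thesis by (simp add: power_diff_1_eq algebra_simps)
qed

lemma convex_on_power_nonneg: "convex_on {0::real..} (\<lambda>x. x ^ j)"
proof (cases "even j")
  case True
  then show ?thesis using convex_power_even[of j] by (rule_tac convex_on_subset) auto
next
  case False
  then show ?thesis using convex_power_odd[of j] by auto
qed

lemma entropy_deficit_lower_bound_moderate: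
  fixes A \<delta> u :: real
  assumes \<delta>: "0 < \<delta>" "\<delta> \<le> 1/2" and u: "1 + \<delta> \<le> u" "u \<le> exp 4" and A: "A \<ge> 0"
    and small: "real k * A * exp 4 ^ (k - 1) \<le> \<delta> / 6"
  shows "u * ln u - u + 1 - A * (u ^ k - 1) \<ge> \<delta>\<^sup>2 / 30"
proof -
  \<comment> \<open>Compare with the tangent at \<open>a\<close>: its slope \<open>ln a \<ge> 2\<delta>/5\<close> beats the slope \<open>\<delta>/6\<close> of the \<open>A\<close>-term.\<close>
  define a where "a = 1 + \<delta> / 2"
  have a: "a > 0" using \<delta> by (simp add: a_def)
  have "ln a \<ge> (\<delta> / 2) / (1 + \<delta> / 2)"
    unfolding a_def using ln_add1_ge[of "\<delta> / 2"] \<delta> by (simp add: add.commute)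
  moreover have "(\<delta> / 2) / (1 + \<delta> / 2) \<ge> 2 * \<delta> / 5" using \<delta> by (simp add: field_simps)
  ultimately have "ln a \<ge> 2 * \<delta> / 5" by linarith
  then have "ln a * (u - a) \<ge> (2 * \<delta> / 5) * (u - a)"
    using u \<delta> by (intro mult_right_mono) (auto simp: a_def)
  moreover have "u * ln u - u \<ge> a * ln a - a + ln a * (u - a)"
    using xlnx_minus_x_ge_tangent[of a u] a u \<delta> by simp
  moreover have "a * ln a - a + 1 \<ge> 0" using xlnx_minus_x_plus_one_nonneg[OF a] .
  moreover have "A * (u ^ k - 1) \<le> (\<delta> / 6) * (u - 1)"
  proof -
    have "A * (u ^ k - 1) \<le> A * (real k * exp 4 ^ (k - 1) * (u - 1))"
      using power_minus_one_le[of u "exp 4" k] u \<delta> A by (intro mult_left_mono) auto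
    also have "\<dots> = (real k * A * exp 4 ^ (k - 1)) * (u - 1)" by simp
    also have "\<dots> \<le> (\<delta> / 6) * (u - 1)" using small u \<delta> by (intro mult_right_mono) auto
    finally show ?thesis .
  qed
  moreover have "(2 * \<delta> / 5) * (u - a) - (\<delta> / 6) * (u - 1) - \<delta>\<^sup>2 / 30 = \<delta> * (7 / 30) * (u - 1 - \<delta>)"
    unfolding a_def power2_eq_square by (simp add: field_simps)
  moreover have "\<delta> * (7 / 30) * (u - 1 - \<delta>) \<ge> 0" using \<delta> u by simp
  ultimately show ?thesis by linarith
qed

lemma entropy_deficit_lower_bound_large:
  fixes A u U :: real
  assumes k: "k \<ge> 1" and u: "exp 4 \<le> u" "u \<le> U" and A: "A \<ge> 0"
    and small: "A * exp 4 ^ (k - 1) \<le> 1"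
    and right_end: "ln U - A * U ^ (k - 1) \<ge> 3"
  shows "u * ln u - u + 1 - A * (u ^ k - 1) \<ge> 2 * u"
proof -
  define g where "g = (\<lambda>x::real. ln x - A * x ^ (k - 1))"
  have "concave_on {exp 4..U} ln"
    using ln_concave unfolding concave_on_def
    by (rule convex_on_subset) (auto intro: less_le_trans[OF exp_gt_zero])
  moreover have "convex_on {exp 4..U} (\<lambda>x. x ^ (k - 1))"
    by (rule convex_on_subset[OF convex_on_power_nonneg]) (auto intro: order_trans[OF exp_ge_zero])
  then have "convex_on {exp 4..U} (\<lambda>x. A * x ^ (k - 1))"
    by (rule convex_on_cmul[OF A])
  ultimately have "concave_on {exp 4..U} g" unfolding g_def by (rule concave_on_diff)
  then have "g u \<ge> min (g (exp 4)) (g U)" using concave_on_ge_min u by auto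
  moreover have "g (exp 4) \<ge> 3" using small by (simp add: g_def)
  moreover have "g U \<ge> 3" using right_end by (simp add: g_def)
  ultimately have "g u \<ge> 3" by linarith
  have "u ^ k = u * u ^ (k - 1)" using k by (cases k) auto
  then have "u * ln u - u + 1 - A * (u ^ k - 1) \<ge> u * (g u - 1)"
    unfolding g_def using A by (simp add: algebra_simps)
  moreover have "u * (g u - 1) \<ge> u * 2"
    using \<open>g u \<ge> 3\<close> u by (intro mult_left_mono) (auto intro: order_trans[OF exp_ge_zero])
  ultimately show ?thesis by linarith
qed

lemma entropy_deficit_lower_bound:
  fixes A \<delta> u U :: real
  assumes k: "k \<ge> 1" and \<delta>: "0 < \<delta>" "\<delta> \<le> 1/2" and u: "1 + \<delta> \<le> u" "u \<le> U" and A: "A \<ge> 0"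
    and small: "real k * A * exp 4 ^ (k - 1) \<le> \<delta> / 6"
    and right_end: "ln U - A * U ^ (k - 1) \<ge> 3"
  shows "u * ln u - u + 1 - A * (u ^ k - 1) \<ge> \<delta>\<^sup>2 / 30"
proof (cases "u \<le> exp 4")
  case True
  then show ?thesis using entropy_deficit_lower_bound_moderate \<delta> u A small by blast
next
  case False
  have "1 * (A * exp 4 ^ (k - 1)) \<le> real k * (A * exp 4 ^ (k - 1))"
    using k A by (intro mult_right_mono) auto
  then have "A * exp 4 ^ (k - 1) \<le> real k * A * exp 4 ^ (k - 1)" by simp
  also have "\<dots> \<le> 1" using small \<delta> by simp
  finally have "u * ln u - u + 1 - A * (u ^ k - 1) \<ge> 2 * u"
    using entropy_deficit_lower_bound_large[OF k _ u(2) A _ right_end] False by simp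
  moreover have "\<delta>\<^sup>2 \<le> 1" using \<delta> by (simp add: power_le_one)
  ultimately show ?thesis using u \<delta> by simp
qed

lemma abs_sum_subset_atMost_le:
  fixes f :: "nat \<Rightarrow> real"
  assumes "T \<subseteq> {..n}" and "\<And>S. S \<in> T \<Longrightarrow> 0 \<le> f S" and "\<And>S. S \<in> T \<Longrightarrow> f S \<le> b"
    and "0 \<le> b"
  shows "\<bar>\<Sum>S\<in>T. f S\<bar> \<le> (real n + 1) * b"
proof -
  have "(\<Sum>S\<in>T. f S) \<le> real (card T) * b" using assms(3) by (rule sum_bounded_above)
  also have "\<dots> \<le> (real n + 1) * b"
    using card_mono[OF _ assms(1)] assms(4) by (intro mult_right_mono) auto
  finally show ?thesis using assms(2) by (simp add: sum_nonneg)
qed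

text \<open>The factor 2 bounds \<open>1 / (1 - d^-k)\<close> for \<open>d \<ge> 2\<close>.\<close>

definition weight_rate :: "nat \<Rightarrow> real \<Rightarrow> real \<Rightarrow> real \<Rightarrow> real" where
  "weight_rate k r p d = 2 * r * p / (1 - p) * ln d / d ^ (k - 1)"

lemma weight_rate_nonneg:
  assumes "r \<ge> 0" "0 \<le> p" "p < 1" "d \<ge> 1"
  shows "weight_rate k r p d \<ge> 0"
  using assms by (simp add: weight_rate_def)

lemma ff_powr_le_exp_weight_rate:
  fixes d p r s :: real
  assumes d: "d \<ge> 2" and p: "0 < p" "p < 1" and r: "r \<ge> 0" and k: "k \<ge> 1"
    and s: "1 / d \<le> s"
  shows "ff k p d s powr (r * (real n * ln d))
         \<le> exp (real n / d * (weight_rate k r p d * ((s * d) ^ k - 1)))"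
proof -
  define q where "q = 1 / d"
  have q: "0 < q" "q \<le> 1/2" using d by (auto simp: q_def)
  have "q ^ k \<le> q" using q k by (simp add: power_le_one power_decreasing[of 1 k q, simplified])
  then have qk: "1/2 \<le> 1 - q ^ k" using q by simp
  have sk: "q ^ k \<le> s ^ k" using s q by (intro power_mono) (auto simp: q_def)
  have c: "r * (real n * ln d) \<ge> 0" using r d by simp
  have "ff k p d s - 1 = p / (1 - p) * ((s ^ k - q ^ k) / (1 - q ^ k))"
    by (simp add: ff_def q_def)
  also have "\<dots> \<le> p / (1 - p) * ((s ^ k - q ^ k) / (1 / 2))"
    using p qk sk by (intro mult_left_mono divide_left_mono) auto
  finally have f_le: "ff k p d s - 1 \<le> p / (1 - p) * ((s ^ k - q ^ k) / (1 / 2))" .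
  have "ff k p d s \<ge> 1" using p sk qk by (simp add: ff_def q_def)
  then have "ff k p d s powr (r * (real n * ln d))
             \<le> exp (r * (real n * ln d) * (ff k p d s - 1))"
    using c by (intro powr_le_exp_mult_minus_one) auto
  also have "\<dots> \<le> exp (r * (real n * ln d) * (p / (1 - p) * ((s ^ k - q ^ k) / (1 / 2))))"
    using mult_left_mono[OF f_le c] by simp
  also have "r * (real n * ln d) * (p / (1 - p) * ((s ^ k - q ^ k) / (1 / 2)))
           = real n / d * (weight_rate k r p d * ((s * d) ^ k - 1))"
  proof -
    have "d ^ k = d * d ^ (k - 1)" using k by (cases k) auto
    then show ?thesis using d p
      by (simp add: weight_rate_def q_def power_mult_distrib power_divide field_simps)
  qed
  finally show ?thesis .
qed

lemma binomial_weight_le_exp: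
  fixes n S k :: nat and d p r \<delta> \<eta>2 :: real
  assumes n: "n > 0" and d: "d \<ge> 2" and p: "0 < p" "p < 1" and r: "r > 0" and k: "k \<ge> 1"
    and \<delta>: "0 < \<delta>" "\<delta> \<le> 1/2"
    and S: "(1 + \<delta>) / d \<le> real S / real n" "real S / real n \<le> \<eta>2" and \<eta>2: "\<eta>2 < 1"
    and small: "real k * weight_rate k r p d * exp 4 ^ (k - 1) \<le> \<delta> / 6"
    and right_end: "ln (\<eta>2 * d) - weight_rate k r p d * (\<eta>2 * d) ^ (k - 1) \<ge> 3"
  shows "BB n d S * ff k p d (real S / real n) powr (r * (real n * ln d))
         \<le> exp (- (real n / d) * (\<delta>\<^sup>2 / 30))"
proof -
  define s where "s = real S / real n"
  define A where "A = weight_rate k r p d"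
  define u where "u = s * d"
  have A: "A \<ge> 0" using r p d by (simp add: A_def weight_rate_nonneg)
  have u_lower: "1 + \<delta> \<le> u" using S(1) d by (simp add: u_def s_def field_simps)
  have u_upper: "u \<le> \<eta>2 * d"
    unfolding u_def s_def using mult_right_mono[OF S(2), of d] d by simp
  have "0 < s * d" using u_lower \<delta> by (simp add: u_def)
  then have s: "0 < s" "s < 1" "1 / d \<le> s"
    using S(2) \<eta>2 \<delta> d u_lower
    by (auto simp: u_def zero_less_mult_iff divide_le_eq s_def[symmetric])
  have "BB n d S \<le> exp (- (real n / d) * (u * ln u - u + 1))"
    using binomial_term_le_exp_entropy[OF n _ _ s(1,2) s_def, of "1 / d"] d
    by (simp add: BB_def u_def)
  moreover have "ff k p d s powr (r * (real n * ln d)) \<le> exp (real n / d * (A * (u ^ k - 1)))"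
    using ff_powr_le_exp_weight_rate[OF d p _ k s(3)] r by (simp add: A_def u_def)
  ultimately have "BB n d S * ff k p d s powr (r * (real n * ln d))
        \<le> exp (- (real n / d) * (u * ln u - u + 1)) * exp (real n / d * (A * (u ^ k - 1)))"
    using d by (intro mult_mono) (auto simp: BB_def)
  also have "\<dots> = exp (- (real n / d) * (u * ln u - u + 1 - A * (u ^ k - 1)))"
    by (simp add: exp_add[symmetric] algebra_simps)
  also have "\<dots> \<le> exp (- (real n / d) * (\<delta>\<^sup>2 / 30))"
  proof -
    have "\<delta>\<^sup>2 / 30 \<le> u * ln u - u + 1 - A * (u ^ k - 1)"
      using entropy_deficit_lower_bound[OF k \<delta> u_lower u_upper A] small right_end
      by (simp add: A_def)
    then have "real n / d * (\<delta>\<^sup>2 / 30) \<le> real n / d * (u * ln u - u + 1 - A * (u ^ k - 1))"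
      using d by (intro mult_left_mono) auto
    then show ?thesis by simp
  qed
  finally show ?thesis by (simp add: s_def)
qed

definition delta :: "nat \<Rightarrow> real \<Rightarrow> real \<Rightarrow> nat \<Rightarrow> real" where
  "delta k \<alpha> lam n = lam * real n powr (real k * \<alpha> - 1) / (\<alpha> * ln (real n))"

lemma delta_pos: "n \<ge> 2 \<Longrightarrow> \<alpha> > 0 \<Longrightarrow> lam > 0 \<Longrightarrow> delta k \<alpha> lam n > 0"
  by (simp add: delta_def)

lemma ln_dd: "n > 0 \<Longrightarrow> ln (dd \<alpha> n) = \<alpha> * ln (real n)"
  by (simp add: dd_def ln_powr)

lemma dd_power: "n > 0 \<Longrightarrow> k \<ge> 1 \<Longrightarrow> dd \<alpha> n ^ (k - 1) = real n powr ((real k - 1) * \<alpha>)"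
  by (simp add: dd_def powr_power of_nat_diff mult.commute)

lemma eta1_eq_delta:
  assumes "n > 0"
  shows "eta1 k \<alpha> lam n = (1 + delta k \<alpha> lam n) / dd \<alpha> n"
proof -
  have "real n powr (real k * \<alpha> - 1) / dd \<alpha> n = real n powr (- (1 - (real k - 1) * \<alpha>))"
    unfolding dd_def by (simp add: powr_diff[symmetric] algebra_simps)
  also have "\<dots> = 1 / real n powr (1 - (real k - 1) * \<alpha>)"
    by (rule powr_minus_divide)
  finally have ratio: "real n powr (real k * \<alpha> - 1) / dd \<alpha> n
                       = 1 / real n powr (1 - (real k - 1) * \<alpha>)" .
  have "delta k \<alpha> lam n / dd \<alpha> n
        = lam / (\<alpha> * ln (real n)) * (real n powr (real k * \<alpha> - 1) / dd \<alpha> n)"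
    by (simp add: delta_def)
  also have "\<dots> = lam / (real n powr (1 - (real k - 1) * \<alpha>) * ln (dd \<alpha> n))"
    unfolding ratio ln_dd[OF assms] by (simp add: mult.commute)
  finally show ?thesis by (simp add: eta1_def add_divide_distrib)
qed

lemma delta_le:
  assumes "n \<ge> 2" "\<alpha> > 0" "lam \<ge> 0" "real k * \<alpha> \<le> 1"
  shows "delta k \<alpha> lam n \<le> lam / (\<alpha> * ln (real n))"
proof -
  have "real n powr (real k * \<alpha> - 1) \<le> real n powr 0" using assms by (intro powr_mono) auto
  then show ?thesis using assms by (simp add: delta_def divide_right_mono mult_left_le)
qed

lemma deficit_exponent_eq:
  assumes "n > 0"
  shows "real n / dd \<alpha> n * (delta k \<alpha> lam n)\<^sup>2
         = lam\<^sup>2 / \<alpha>\<^sup>2 * (real n powr ((2 * real k - 1) * \<alpha> - 1) / (ln (real n))\<^sup>2)"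
proof -
  have "real n / dd \<alpha> n = real n powr (1 - \<alpha>)"
    using assms by (simp add: dd_def powr_diff)
  moreover have "(real n powr (real k * \<alpha> - 1))\<^sup>2 = real n powr (2 * (real k * \<alpha> - 1))"
    by (simp add: power2_eq_square powr_add[symmetric] algebra_simps)
  ultimately have "real n / dd \<alpha> n * (real n powr (real k * \<alpha> - 1))\<^sup>2
                   = real n powr ((2 * real k - 1) * \<alpha> - 1)"
    by (simp add: powr_add[symmetric] algebra_simps)
  then show ?thesis by (simp add: delta_def power2_eq_square field_simps)
qed

lemma Phi_le_exp_delta:
  assumes k: "k \<ge> 1" and p: "0 < p" "p < 1" and r: "r > 0" and \<alpha>: "\<alpha> > 0" and lam: "lam > 0"
    and n: "n \<ge> 2" and d: "2 \<le> dd \<alpha> n" and \<delta>: "delta k \<alpha> lam n \<le> 1/2" and \<eta>2: "\<eta>2 < 1"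
    and small: "real k * weight_rate k r p (dd \<alpha> n) * exp 4 ^ (k - 1) \<le> delta k \<alpha> lam n / 6"
    and right_end: "3 \<le> ln (\<eta>2 * dd \<alpha> n) - weight_rate k r p (dd \<alpha> n) * (\<eta>2 * dd \<alpha> n) ^ (k - 1)"
    and S: "real n * eta1 k \<alpha> lam n \<le> real S" "real S \<le> real n * \<eta>2"
  shows "Phi k \<alpha> r p n S \<le> exp (- (real n / dd \<alpha> n) * ((delta k \<alpha> lam n)\<^sup>2 / 30))"
proof -
  have n0: "n > 0" using n by simp
  have "(1 + delta k \<alpha> lam n) / dd \<alpha> n \<le> real S / real n"
    using S(1) n0 by (simp add: eta1_eq_delta[OF n0, symmetric] field_simps)
  moreover have "real S / real n \<le> \<eta>2" using S(2) n0 by (simp add: field_simps)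
  ultimately show ?thesis
    using binomial_weight_le_exp[OF n0 d p r k delta_pos[OF n \<alpha> lam] \<delta> _ _ \<eta>2 small right_end]
    by (simp add: Phi_def WW_def mm_def)
qed

lemma Phi_nonneg:
  assumes "1 \<le> dd \<alpha> n"
  shows "0 \<le> Phi k \<alpha> r p n S"
proof -
  have "1 / dd \<alpha> n \<le> 1" using assms by simp
  then show ?thesis unfolding Phi_def BB_def WW_def using assms
    by (intro mult_nonneg_nonneg zero_le_power powr_ge_zero) auto
qed

lemma abs_sum_Phi_le:
  assumes k: "k \<ge> 1" and p: "0 < p" "p < 1" and r: "r > 0" and \<alpha>: "\<alpha> > 0" and lam: "lam > 0"
    and n: "n \<ge> 2" and d: "2 \<le> dd \<alpha> n" and \<delta>: "delta k \<alpha> lam n \<le> 1/2" and \<eta>2: "\<eta>2 < 1"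
    and small: "real k * weight_rate k r p (dd \<alpha> n) * exp 4 ^ (k - 1) \<le> delta k \<alpha> lam n / 6"
    and right_end: "3 \<le> ln (\<eta>2 * dd \<alpha> n) - weight_rate k r p (dd \<alpha> n) * (\<eta>2 * dd \<alpha> n) ^ (k - 1)"
  shows "\<bar>\<Sum>S\<in>{S. real n * eta1 k \<alpha> lam n \<le> real S \<and> real S \<le> real n * \<eta>2}. Phi k \<alpha> r p n S\<bar>
         \<le> (real n + 1)
            * exp (- (lam\<^sup>2 / \<alpha>\<^sup>2 / 30 * (real n powr ((2 * real k - 1) * \<alpha> - 1) / (ln (real n))\<^sup>2)))"
    (is "\<bar>\<Sum>S\<in>?T. _\<bar> \<le> _ * exp (- ?E)")
proof (rule abs_sum_subset_atMost_le)
  have "- (real n / dd \<alpha> n) * ((delta k \<alpha> lam n)\<^sup>2 / 30) = - ?E"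
    using deficit_exponent_eq[of n \<alpha> k lam] n by simp
  then show "Phi k \<alpha> r p n S \<le> exp (- ?E)" if "S \<in> ?T" for S
    using Phi_le_exp_delta[OF k p r \<alpha> lam n d \<delta> \<eta>2 small right_end] that by simp
  show "0 \<le> Phi k \<alpha> r p n S" for S
    using d by (intro Phi_nonneg) auto
  show "?T \<subseteq> {..n}"
    using \<eta>2 mult_left_le[of \<eta>2 "real n"] by (auto intro: order_trans)
qed simp

lemma tendsto_Suc_mult_exp_neg_powr_over_ln_sq:
  assumes "\<beta> > 0" "c > 0"
  shows "(\<lambda>n::nat. (real n + 1) * exp (- (c * (real n powr \<beta> / (ln (real n))\<^sup>2)))) \<longlonglongrightarrow> 0"
  using assms by real_asymp

lemma eventually_dd_ge_2: "\<alpha> > 0 \<Longrightarrow> eventually (\<lambda>n. 2 \<le> dd \<alpha> n) sequentially"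
  unfolding dd_def by real_asymp

lemma eventually_delta_le_half:
  assumes "\<alpha> > 0" "lam > 0" "real k * \<alpha> \<le> 1"
  shows "eventually (\<lambda>n. delta k \<alpha> lam n \<le> 1/2) sequentially"
proof -
  have "eventually (\<lambda>n::nat. lam / (\<alpha> * ln (real n)) \<le> 1/2) sequentially"
    using assms by real_asymp
  with eventually_ge_at_top[of 2] show ?thesis
  proof eventually_elim
    case (elim n)
    have "delta k \<alpha> lam n \<le> lam / (\<alpha> * ln (real n))"
      using assms elim by (intro delta_le) auto
    with elim show ?case by linarith
  qed
qed

lemma eventually_weight_rate_small:
  assumes k: "k \<ge> 1" and p: "p < 1" and \<alpha>: "\<alpha> > 0" and lam: "lam > 0"
    and growth: "(2 * real k - 1) * \<alpha> > 1"
  shows "eventually (\<lambda>n. real k * weight_rate k r p (dd \<alpha> n) * exp 4 ^ (k - 1)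
                            \<le> delta k \<alpha> lam n / 6) sequentially"
proof -
  define \<beta> where "\<beta> = (2 * real k - 1) * \<alpha> - 1"
  define C where "C = 12 * real k * exp 4 ^ (k - 1) * r * p / (1 - p) * \<alpha>\<^sup>2"
  have "\<beta> > 0" using growth by (simp add: \<beta>_def)
  then have "eventually (\<lambda>n::nat. C * (ln (real n))\<^sup>2 \<le> lam * real n powr \<beta>) sequentially"
    using lam by real_asymp
  with eventually_ge_at_top[of 2] show ?thesis
  proof eventually_elim
    case (elim n)
    define x where "x = real n"
    define t where "t = ln x"
    have n: "n > 0" and x: "x \<ge> 2" and t: "t > 0" using elim by (auto simp: x_def t_def)
    have "x powr (real k * \<alpha> - 1) = x powr \<beta> / x powr ((real k - 1) * \<alpha>)"
      by (simp add: \<beta>_def powr_diff[symmetric] algebra_simps)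
    then have delta_eq:
      "delta k \<alpha> lam n / 6 = lam * x powr \<beta> / (6 * \<alpha> * t * x powr ((real k - 1) * \<alpha>))"
      by (simp add: delta_def x_def t_def)
    have rate_eq: "real k * weight_rate k r p (dd \<alpha> n) * exp 4 ^ (k - 1)
          = C * t\<^sup>2 / (6 * \<alpha> * t * x powr ((real k - 1) * \<alpha>))"
      using p \<alpha> t x unfolding weight_rate_def ln_dd[OF n] dd_power[OF n k]
      by (simp add: C_def x_def[symmetric] t_def[symmetric] power2_eq_square field_simps)
    have "C * t\<^sup>2 / (6 * \<alpha> * t * x powr ((real k - 1) * \<alpha>))
          \<le> lam * x powr \<beta> / (6 * \<alpha> * t * x powr ((real k - 1) * \<alpha>))"
      using elim \<alpha> t by (intro divide_right_mono) (auto simp: x_def t_def)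
    then show ?case unfolding delta_eq rate_eq .
  qed
qed

lemma eventually_weight_rate_right_end:
  assumes k: "k \<ge> 1" and p: "p < 1" and \<alpha>: "\<alpha> > 0" and \<eta>2: "\<eta>2 > 0"
    and c: "2 * r * p / (1 - p) * \<eta>2 ^ (k - 1) < 1"
  shows "eventually (\<lambda>n. 3 \<le> ln (\<eta>2 * dd \<alpha> n)
                              - weight_rate k r p (dd \<alpha> n) * (\<eta>2 * dd \<alpha> n) ^ (k - 1)) sequentially"
proof -
  define c where "c = 2 * r * p / (1 - p) * \<eta>2 ^ (k - 1)"
  have "1 - c > 0" using c by (simp add: c_def)
  then have "eventually (\<lambda>n::nat. 3 \<le> (1 - c) * (\<alpha> * ln (real n)) + ln \<eta>2) sequentially"
    using \<alpha> by real_asymp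
  with eventually_ge_at_top[of 1] show ?thesis
  proof eventually_elim
    case (elim n)
    then have n: "n > 0" by simp
    have d: "dd \<alpha> n > 0" using n by (simp add: dd_def)
    have "weight_rate k r p (dd \<alpha> n) * (\<eta>2 * dd \<alpha> n) ^ (k - 1)
          = c * ln (dd \<alpha> n) * (dd \<alpha> n ^ (k - 1) / dd \<alpha> n ^ (k - 1))"
      by (simp add: weight_rate_def c_def power_mult_distrib)
    also have "\<dots> = c * (\<alpha> * ln (real n))" using d by (simp add: ln_dd[OF n])
    finally have "ln (\<eta>2 * dd \<alpha> n) - weight_rate k r p (dd \<alpha> n) * (\<eta>2 * dd \<alpha> n) ^ (k - 1)
          = (1 - c) * (\<alpha> * ln (real n)) + ln \<eta>2"
      using \<eta>2 d by (simp add: ln_mult ln_dd[OF n] algebra_simps)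
    then show ?case using elim by simp
  qed
qed

lemma weight_constant_lt_one:
  fixes k :: nat and \<alpha> r p \<eta>2 \<mu> :: real
  assumes k: "k \<ge> 2" and \<alpha>: "\<alpha> > 0" and r: "r > 0" and p: "0 < p" "p < 1"
    and k\<alpha>: "real k * \<alpha> \<le> 1" and \<eta>2: "0 < \<eta>2"
    and \<mu>_small: "((2 * real k - 1) * \<alpha> - 1) / (2 * (real k - 1)) / \<alpha> - \<mu> * \<eta>2 ^ (k - 1) > 0"
    and \<mu>_large: "\<mu> > real k * p * r / (1 - p)"
  shows "2 * r * p / (1 - p) * \<eta>2 ^ (k - 1) < 1"
proof -
  define c where "c = r * p / (1 - p) * \<eta>2 ^ (k - 1)"
  have c: "c \<ge> 0" using r p \<eta>2 by (simp add: c_def)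
  have "real k * c = (real k * p * r / (1 - p)) * \<eta>2 ^ (k - 1)" by (simp add: c_def field_simps)
  also have "\<dots> < \<mu> * \<eta>2 ^ (k - 1)" using \<mu>_large \<eta>2 by (intro mult_strict_right_mono) auto
  also have "\<dots> < ((2 * real k - 1) * \<alpha> - 1) / (2 * (real k - 1)) / \<alpha>" using \<mu>_small by simp
  also have "\<dots> \<le> 1"
  proof -
    have "2 * \<alpha> \<le> real k * \<alpha>" using k \<alpha> by (intro mult_right_mono) auto
    then have "(2 * real k - 1) * \<alpha> - 1 \<le> 2 * (real k - 1) * \<alpha>" using k\<alpha> by (simp add: algebra_simps)
    then show ?thesis using k \<alpha> by (simp add: field_simps)
  qed
  finally have "real k * c < 1" .
  moreover have "2 * c \<le> real k * c" using k c by (intro mult_right_mono) auto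
  ultimately show ?thesis by (simp add: c_def)
qed

theorem lemma4p7:
  fixes k :: nat and \<alpha> r p lam \<eta>2 \<eta>3 \<mu> :: real
  assumes "k \<ge> 2" and "\<alpha> > 0" and "r > 0" and "0 < p" and "p < 1"
    and "(2 * real k - 1) * \<alpha> > 1" and "real k * \<alpha> \<le> 1"
    and "real k \<ge> tau p * ln (tau p) / (tau p - 1)"
    and "r < 1 / ln (tau p)"
    and "lam > 0"
    and "0 < \<eta>2" and "\<eta>2 < \<eta>3" and "\<eta>3 < 1"
    and "((2 * real k - 1) * \<alpha> - 1) / (2 * (real k - 1)) / \<alpha> - \<mu> * \<eta>2 ^ (k - 1) > 0"
    and "\<mu> > real k * p * r / (1 - p)"
    and "r * ln (1 - p) + \<eta>3 > 0"
  shows "(\<lambda>n. \<Sum>S\<in>{S::nat. real n * eta1 k \<alpha> lam n \<le> real S \<and> real S \<le> real n * \<eta>2}.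
            Phi k \<alpha> r p n S) \<longlonglongrightarrow> 0"
proof -
  note k = assms(1) and \<alpha> = assms(2) and r = assms(3) and p = assms(4,5) and growth = assms(6)
    and k\<alpha> = assms(7) and lam = assms(10) and \<eta>2 = assms(11) and \<eta>2_lt_1 = less_trans[OF assms(12,13)]
  have k1: "k \<ge> 1" using k by simp
  define E where "E n = lam\<^sup>2 / \<alpha>\<^sup>2 / 30 * (real n powr ((2 * real k - 1) * \<alpha> - 1) / (ln (real n))\<^sup>2)"
    for n :: nat
  have "2 * r * p / (1 - p) * \<eta>2 ^ (k - 1) < 1"
    using weight_constant_lt_one[OF k \<alpha> r p k\<alpha> \<eta>2 assms(14,15)] .
  then have "eventually (\<lambda>n. n \<ge> 2 \<and> 2 \<le> dd \<alpha> n \<and> delta k \<alpha> lam n \<le> 1/2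
      \<and> real k * weight_rate k r p (dd \<alpha> n) * exp 4 ^ (k - 1) \<le> delta k \<alpha> lam n / 6
      \<and> 3 \<le> ln (\<eta>2 * dd \<alpha> n) - weight_rate k r p (dd \<alpha> n) * (\<eta>2 * dd \<alpha> n) ^ (k - 1)) sequentially"
    using k1 p \<alpha> lam growth k\<alpha> \<eta>2
    by (intro eventually_conj eventually_ge_at_top eventually_dd_ge_2 eventually_delta_le_half
        eventually_weight_rate_small eventually_weight_rate_right_end)
  then have "eventually (\<lambda>n. norm (\<Sum>S\<in>{S::nat. real n * eta1 k \<alpha> lam n \<le> real S \<and> real S \<le> real n * \<eta>2}.
                 Phi k \<alpha> r p n S) \<le> (real n + 1) * exp (- E n)) sequentially"
    unfolding real_norm_def E_def
    by eventually_elim (use abs_sum_Phi_le[OF k1 p r \<alpha> lam _ _ _ \<eta>2_lt_1] in blast)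
  moreover have "(\<lambda>n. (real n + 1) * exp (- E n)) \<longlonglongrightarrow> 0"
    unfolding E_def using growth \<alpha> lam by (intro tendsto_Suc_mult_exp_neg_powr_over_ln_sq) auto
  ultimately show ?thesis by (rule Lim_null_comparison)
qed

end
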